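(* Let $f\in\mathscr{L}^r$ be a Lorenz expanding map. Then $f$ is eventually onto: for every open interval $J\subset[-1,1]\setminus\{0\}$ there is an integer $N>0$ such that $\bigcup_{i=0}^N f^i(J)=(-1,1)$ (where $f^i(J)$ denotes the image under $f^i$ of the set of points of $J$ at which $f^i$ is defined).
   Context: For $r\ge1$, $\mathscr{L}^r$ is the set of $C^r$ maps $f:[-1,1]\setminus\{0\}\to(-1,1)$ such that $\lim_{x\to0^-}f(x)=1$, $\lim_{x\to0^-}f'(x)=+\infty$, $\lim_{x\to0^+}f(x)=-1$, $\lim_{x\to0^+}f'(x)=+\infty$, and $-1<f(x)<1$, $f'(x)>\sqrt2$ for all $x\in[-1,1]\setminus\{0\}$. Such $f$ is called a Lorenz expanding map. The iterate $f^n$ is defined at $x$ if $f^m(x)\neq0$ for all $0\le m<n$. *)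

theory Defs
  imports "HOL-Analysis.Analysis"
begin

definition lorenz_dom :: "real set" where
  "lorenz_dom = {-1..1} - {0}"

text \<open>C^r on a set S (one-sided derivatives at boundary points): there is a family of
  functions D 0 = f, D 1, ..., D r with D (k+1) the derivative of D k within S for k < r,
  and D r continuous on S.\<close>
definition Cr_on :: "nat \<Rightarrow> real set \<Rightarrow> (real \<Rightarrow> real) \<Rightarrow> bool" where
  "Cr_on r S f \<longleftrightarrow> (\<exists>D :: nat \<Rightarrow> real \<Rightarrow> real.
      (\<forall>x\<in>S. D 0 x = f x) \<and>
      (\<forall>k<r. \<forall>x\<in>S. (D k has_real_derivative D (Suc k) x) (at x within S)) \<and>
      continuous_on S (D r))"

definition lorenz_expanding :: "nat \<Rightarrow> (real \<Rightarrow> real) \<Rightarrow> bool" where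
  "lorenz_expanding r f \<longleftrightarrow> 1 \<le> r \<and> Cr_on r lorenz_dom f \<and>
     (\<exists>f'. (\<forall>x\<in>lorenz_dom. (f has_real_derivative f' x) (at x within lorenz_dom)) \<and>
       (f \<longlongrightarrow> 1) (at_left 0) \<and> filterlim f' at_top (at_left 0) \<and>
       (f \<longlongrightarrow> -1) (at_right 0) \<and> filterlim f' at_top (at_right 0) \<and>
       (\<forall>x\<in>lorenz_dom. -1 < f x \<and> f x < 1 \<and> f' x > sqrt 2))"

definition iter_defined :: "(real \<Rightarrow> real) \<Rightarrow> nat \<Rightarrow> real \<Rightarrow> bool" where
  "iter_defined f n x \<longleftrightarrow> (\<forall>m<n. (f ^^ m) x \<noteq> 0)"

definition iter_image :: "(real \<Rightarrow> real) \<Rightarrow> nat \<Rightarrow> real set \<Rightarrow> real set" where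
  "iter_image f n J = (f ^^ n) ` {x \<in> J. iter_defined f n x}"

end

theory Submission
  imports Defs
begin

text \<open>Since f' is continuous on the domain and tends to infinity at 0, it is bounded below by
  some \<open>\<mu> > sqrt 2\<close>. An interval of length \<open>\<ell>\<close> in \<open>f\<^sup>n(J)\<close> avoiding 0 is mapped onto
  an interval of length at least \<open>\<mu>\<ell>\<close>. If it contains 0, its image contains \<open>(f c, 1)\<close> and
  \<open>(-1, f d)\<close>. Should one of these contain \<open>(-1,0)\<close> or \<open>(0,1)\<close>, the next image fills the rest
  of \<open>(-1,1)\<close>; otherwise the longer one has length at least \<open>\<mu>\<ell>/2\<close>, avoids 0, and its image
  has length at least \<open>\<mu>\<^sup>2\<ell>/2\<close>. As \<open>min \<mu> (\<mu>\<^sup>2/2) > 1\<close> and lengths never exceed 2, the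
  images must eventually cover \<open>(-1,1)\<close>.\<close>

lemma continuous_on_fun_upd:
  fixes g :: "'a::t1_space \<Rightarrow> 'b::topological_space"
  assumes cont: "continuous_on (S - {a}) g" and lim: "(g \<longlongrightarrow> L) (at a within S)"
  shows "continuous_on S (g(a := L))"
  unfolding continuous_on_def
proof
  fix x assume "x \<in> S"
  have agree: "\<forall>\<^sub>F y in at x within T. g y = (g(a := L)) y" for T
    using eventually_neq_at_within[of a x T] by eventually_elim simp
  show "(g(a := L) \<longlongrightarrow> (g(a := L)) x) (at x within S)"
  proof (cases "x = a")
    case True
    then show ?thesis
      using tendsto_cong[OF agree] lim by (simp del: fun_upd_apply add: fun_upd_same)
  next
    case False
    have "at x within S = at x within (S - {a})"
      using False by (intro at_within_nhd[of _ "- {a}"]) auto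
    moreover have "(g \<longlongrightarrow> g x) (at x within (S - {a}))"
      using cont \<open>x \<in> S\<close> False by (simp add: continuous_on_def)
    ultimately show ?thesis
      using tendsto_cong[OF agree] False by (simp del: fun_upd_apply add: fun_upd_other)
  qed
qed

lemma expanding_interval_image:
  fixes g g' :: "real \<Rightarrow> real"
  assumes "c < d" and cont: "continuous_on {c..d} g"
    and deriv: "\<And>x. x \<in> {c<..<d} \<Longrightarrow> (g has_real_derivative g' x) (at x within {c<..<d})"
    and expand: "\<And>x. x \<in> {c<..<d} \<Longrightarrow> \<mu> \<le> g' x"
  shows "\<mu> * (d - c) \<le> g d - g c" and "{g c<..<g d} \<subseteq> g ` {c<..<d}"
proof -
  have deriv_at: "(g has_real_derivative g' x) (at x)" if "x \<in> {c<..<d}" for x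
    using deriv[OF that] at_within_open[OF that open_greaterThanLessThan] by simp
  obtain l z where z: "z \<in> {c<..<d}" "DERIV g z :> l" "g d - g c = (d - c) * l"
    using MVT[OF \<open>c < d\<close> cont] deriv_at
    by (metis greaterThanLessThan_iff real_differentiable_def)
  have "l = g' z"
    using DERIV_unique[OF z(2) deriv_at[OF z(1)]] .
  then show "\<mu> * (d - c) \<le> g d - g c"
    using mult_right_mono[OF expand[OF z(1)], of "d - c"] \<open>c < d\<close> z(3)
    by (simp add: mult.commute)
  show "{g c<..<g d} \<subseteq> g ` {c<..<d}"
  proof
    fix y assume y: "y \<in> {g c<..<g d}"
    then obtain x where "c \<le> x" "x \<le> d" "g x = y"
      using IVT'[of g c y d] \<open>c < d\<close> cont by auto
    moreover have "x \<noteq> c" "x \<noteq> d"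
      using y \<open>g x = y\<close> by auto
    ultimately show "y \<in> g ` {c<..<d}" by auto
  qed
qed

lemma lorenz_dom_islimpt:
  assumes "x \<in> lorenz_dom" shows "x islimpt lorenz_dom"
proof -
  have "x islimpt {-1..<0} \<or> x islimpt {0<..1}"
    using assms by (auto simp: lorenz_dom_def)
  moreover have "{-1..<0} \<union> {0<..1} \<subseteq> lorenz_dom"
    by (auto simp: lorenz_dom_def)
  ultimately show ?thesis
    by (meson islimpt_subset le_sup_iff)
qed

lemma Cr_on_derivative_continuous:
  assumes "1 \<le> r" and "Cr_on r S f"
    and deriv: "\<And>x. x \<in> S \<Longrightarrow> (f has_real_derivative f' x) (at x within S)"
    and limpt: "\<And>x. x \<in> S \<Longrightarrow> x islimpt S"
  shows "continuous_on S f'"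
proof -
  obtain D where D0: "\<forall>x\<in>S. D 0 x = f x"
    and DSuc: "\<forall>k<r. \<forall>x\<in>S. (D k has_real_derivative D (Suc k) x) (at x within S)"
    and Dr: "continuous_on S (D r)"
    using \<open>Cr_on r S f\<close> unfolding Cr_on_def by blast
  have "f' x = D 1 x" if "x \<in> S" for x
  proof -
    have "(f has_real_derivative D 1 x) (at x within S)"
    proof (rule has_field_derivative_transform_within[where d = 1])
      show "(D 0 has_real_derivative D 1 x) (at x within S)"
        using DSuc \<open>1 \<le> r\<close> that by simp
    qed (use D0 that in auto)
    moreover have "at x within S \<noteq> bot"
      using limpt[OF that] by (simp add: trivial_limit_within)
    ultimately show ?thesis
      using has_field_derivative_unique deriv[OF that] by blast
  qed
  moreover have "continuous_on S (D 1)"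
  proof (cases "r = 1")
    case False
    then show ?thesis
      using DSuc \<open>1 \<le> r\<close>
      by (intro DERIV_continuous_on[where D = "D 2"]) (simp add: numeral_2_eq_2)
  qed (use Dr in simp)
  ultimately show ?thesis
    by (simp cong: continuous_on_cong)
qed

lemma lorenz_dom_uniform_lower_bound:
  fixes g :: "real \<Rightarrow> real"
  assumes cont: "continuous_on lorenz_dom g"
    and left: "filterlim g at_top (at_left 0)" and right: "filterlim g at_top (at_right 0)"
    and greater: "\<And>x. x \<in> lorenz_dom \<Longrightarrow> t < g x"
  shows "\<exists>\<mu>>t. \<forall>x\<in>lorenz_dom. \<mu> \<le> g x"
proof -
  have "\<forall>\<^sub>F x in at 0. t + 1 \<le> g x"
    using left right by (simp add: eventually_at_split filterlim_at_top)
  then obtain \<delta> where "0 < \<delta>"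
    and near0: "\<And>x. x \<noteq> 0 \<Longrightarrow> \<bar>x\<bar> < \<delta> \<Longrightarrow> t + 1 \<le> g x"
    by (auto simp: eventually_at dist_real_def)
  define K where "K = {-1..- min \<delta> 1} \<union> {min \<delta> 1..1}"
  have "K \<subseteq> lorenz_dom"
    using \<open>0 < \<delta>\<close> by (auto simp: K_def lorenz_dom_def)
  moreover have "compact K" "K \<noteq> {}"
    by (auto simp: K_def compact_Un)
  ultimately obtain y where "y \<in> K" and y_min: "\<And>x. x \<in> K \<Longrightarrow> g y \<le> g x"
    using continuous_attains_inf[of K g] continuous_on_subset[OF cont] by blast
  show ?thesis
  proof (intro exI[of _ "min (t + 1) (g y)"] conjI ballI)
    show "t < min (t + 1) (g y)"
      using greater \<open>y \<in> K\<close> \<open>K \<subseteq> lorenz_dom\<close> by auto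
    fix x assume "x \<in> lorenz_dom"
    then have "x \<in> K \<or> (x \<noteq> 0 \<and> \<bar>x\<bar> < \<delta>)"
      by (auto simp: K_def lorenz_dom_def)
    then show "min (t + 1) (g y) \<le> g x"
      using y_min near0 by (meson min.coboundedI1 min.coboundedI2)
  qed
qed

lemma iter_defined_Suc:
  "iter_defined f (Suc n) x \<longleftrightarrow> iter_defined f n x \<and> (f ^^ n) x \<noteq> 0"
  by (auto simp: iter_defined_def less_Suc_eq)

lemma iter_image_0 [simp]: "iter_image f 0 J = J"
  by (simp add: iter_image_def iter_defined_def)

lemma iter_image_Suc: "iter_image f (Suc n) J = f ` (iter_image f n J - {0})"
  by (auto simp: iter_image_def iter_defined_Suc image_iff)

definition images_cover :: "(real \<Rightarrow> real) \<Rightarrow> real set \<Rightarrow> bool" where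
  "images_cover f J \<longleftrightarrow> (\<exists>N. {-1<..<1} \<subseteq> (\<Union>i\<le>N. iter_image f i J))"

definition contains_subinterval :: "real set \<Rightarrow> real \<Rightarrow> bool" where
  "contains_subinterval S L \<longleftrightarrow> (\<exists>c d. -1 \<le> c \<and> d \<le> 1 \<and> L \<le> d - c \<and> {c<..<d} \<subseteq> S)"

lemma contains_subinterval_mono:
  "contains_subinterval S L \<Longrightarrow> L' \<le> L \<Longrightarrow> contains_subinterval S L'"
  unfolding contains_subinterval_def by force

locale lorenz_map =
  fixes f f' :: "real \<Rightarrow> real" and \<mu> :: real
  assumes has_derivative:
      "\<And>x. x \<in> lorenz_dom \<Longrightarrow> (f has_real_derivative f' x) (at x within lorenz_dom)"
    and tendsto_at_left_0: "(f \<longlongrightarrow> 1) (at_left 0)"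
    and tendsto_at_right_0: "(f \<longlongrightarrow> -1) (at_right 0)"
    and maps_into: "\<And>x. x \<in> lorenz_dom \<Longrightarrow> f x \<in> {-1<..<1}"
    and sqrt_2_less: "sqrt 2 < \<mu>"
    and expanding: "\<And>x. x \<in> lorenz_dom \<Longrightarrow> \<mu> \<le> f' x"

lemma lorenz_expanding_imp_lorenz_map:
  assumes "lorenz_expanding r f"
  shows "\<exists>f' \<mu>. lorenz_map f f' \<mu>"
proof -
  obtain f' where "1 \<le> r" and "Cr_on r lorenz_dom f"
    and deriv: "\<And>x. x \<in> lorenz_dom \<Longrightarrow> (f has_real_derivative f' x) (at x within lorenz_dom)"
    and lim: "(f \<longlongrightarrow> 1) (at_left 0)" "(f \<longlongrightarrow> -1) (at_right 0)"
    and "filterlim f' at_top (at_left 0)" "filterlim f' at_top (at_right 0)"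
    and bounds: "\<And>x. x \<in> lorenz_dom \<Longrightarrow> -1 < f x \<and> f x < 1 \<and> sqrt 2 < f' x"
    using assms unfolding lorenz_expanding_def by blast
  moreover have "continuous_on lorenz_dom f'"
    using Cr_on_derivative_continuous \<open>1 \<le> r\<close> \<open>Cr_on r lorenz_dom f\<close> deriv lorenz_dom_islimpt
    by blast
  ultimately obtain \<mu> where "sqrt 2 < \<mu>" "\<And>x. x \<in> lorenz_dom \<Longrightarrow> \<mu> \<le> f' x"
    using lorenz_dom_uniform_lower_bound[of f' "sqrt 2"] by blast
  with deriv lim bounds show ?thesis
    unfolding lorenz_map_def by auto
qed

context lorenz_map
begin

lemma one_less_mu: "1 < \<mu>"
  using sqrt_2_less real_sqrt_gt_1_iff[of 2] by linarith

lemma two_less_mu_squared: "2 < \<mu>\<^sup>2"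
  using sqrt_2_less power_strict_mono[of "sqrt 2" \<mu> 2] by simp

lemma branch_expansion:
  assumes "c < d" and "{c<..<d} \<subseteq> lorenz_dom" and "continuous_on {c..d} g"
    and agree: "\<And>x. x \<in> {c<..<d} \<Longrightarrow> g x = f x"
  shows "\<mu> * (d - c) \<le> g d - g c" and "{g c<..<g d} \<subseteq> f ` {c<..<d}"
proof -
  have "(g has_real_derivative f' x) (at x within {c<..<d})" if "x \<in> {c<..<d}" for x
  proof (rule has_field_derivative_transform_within[where d = 1])
    show "(f has_real_derivative f' x) (at x within {c<..<d})"
      using DERIV_subset[OF has_derivative assms(2)] that assms(2) by blast
  qed (use that agree in auto)
  moreover have "\<mu> \<le> f' x" if "x \<in> {c<..<d}" for x
    using expanding that assms(2) by blast
  ultimately have "\<mu> * (d - c) \<le> g d - g c" and "{g c<..<g d} \<subseteq> g ` {c<..<d}"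
    using expanding_interval_image[OF assms(1,3)] by blast+
  moreover have "g ` {c<..<d} = f ` {c<..<d}"
    using agree by (rule image_cong[OF refl])
  ultimately show "\<mu> * (d - c) \<le> g d - g c" and "{g c<..<g d} \<subseteq> f ` {c<..<d}"
    by simp_all
qed

definition left_branch :: "real \<Rightarrow> real" where
  "left_branch = f(0 := 1)"

definition right_branch :: "real \<Rightarrow> real" where
  "right_branch = f(0 := -1)"

lemma continuous_on_left_branch: "continuous_on {-1..0} left_branch"
  unfolding left_branch_def
proof (rule continuous_on_fun_upd)
  show "continuous_on ({-1..0} - {0}) f"
    by (rule continuous_on_subset[OF DERIV_continuous_on[OF has_derivative]])
       (auto simp: lorenz_dom_def)
  show "(f \<longlongrightarrow> 1) (at 0 within {-1..0})"
    using tendsto_at_left_0 by (simp add: at_within_Icc_at_left)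
qed

lemma continuous_on_right_branch: "continuous_on {0..1} right_branch"
  unfolding right_branch_def
proof (rule continuous_on_fun_upd)
  show "continuous_on ({0..1} - {0}) f"
    by (rule continuous_on_subset[OF DERIV_continuous_on[OF has_derivative]])
       (auto simp: lorenz_dom_def)
  show "(f \<longlongrightarrow> -1) (at 0 within {0..1})"
    using tendsto_at_right_0 by (simp add: at_within_Icc_at_right)
qed

lemma left_branch_expansion:
  assumes "-1 \<le> c" "c < d" "d \<le> 0"
  shows "\<mu> * (d - c) \<le> left_branch d - f c" and "{f c<..<left_branch d} \<subseteq> f ` {c<..<d}"
proof -
  have "{c<..<d} \<subseteq> lorenz_dom" "continuous_on {c..d} left_branch"
    using assms
    by (auto simp: lorenz_dom_def intro: continuous_on_subset[OF continuous_on_left_branch])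
  moreover have "left_branch x = f x" if "x \<in> {c<..<d} \<or> x = c" for x
    using that assms by (auto simp: left_branch_def)
  ultimately show "\<mu> * (d - c) \<le> left_branch d - f c"
    and "{f c<..<left_branch d} \<subseteq> f ` {c<..<d}"
    using branch_expansion[OF \<open>c < d\<close>, of left_branch] by auto
qed

lemma right_branch_expansion:
  assumes "0 \<le> c" "c < d" "d \<le> 1"
  shows "\<mu> * (d - c) \<le> f d - right_branch c" and "{right_branch c<..<f d} \<subseteq> f ` {c<..<d}"
proof -
  have "{c<..<d} \<subseteq> lorenz_dom" "continuous_on {c..d} right_branch"
    using assms
    by (auto simp: lorenz_dom_def intro: continuous_on_subset[OF continuous_on_right_branch])
  moreover have "right_branch x = f x" if "x \<in> {c<..<d} \<or> x = d" for x
    using that assms by (auto simp: right_branch_def)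
  ultimately show "\<mu> * (d - c) \<le> f d - right_branch c"
    and "{right_branch c<..<f d} \<subseteq> f ` {c<..<d}"
    using branch_expansion[OF \<open>c < d\<close>, of right_branch] by auto
qed

lemma iter_image_subset: "J \<subseteq> {-1<..<1} \<Longrightarrow> iter_image f n J \<subseteq> {-1<..<1}"
proof (induction n)
  case (Suc n)
  then have "iter_image f n J - {0} \<subseteq> lorenz_dom"
    by (auto simp: lorenz_dom_def)
  then show ?case
    using maps_into by (auto simp: iter_image_Suc)
qed simp

lemma f_minus_one_less_0: "f (-1) < 0"
  using left_branch_expansion(1)[of "-1" 0] one_less_mu by (simp add: left_branch_def)

lemma f_one_greater_0: "0 < f 1"
  using right_branch_expansion(1)[of 0 1] one_less_mu by (simp add: right_branch_def)

lemma images_cover_if_left_half: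
  assumes "{-1<..<0} \<subseteq> iter_image f n J"
  shows "images_cover f J"
proof -
  have "{f (-1)<..<1} \<subseteq> f ` {-1<..<0}"
    using left_branch_expansion(2)[of "-1" 0] by (simp add: left_branch_def)
  also have "\<dots> \<subseteq> iter_image f (Suc n) J"
    using assms by (auto simp: iter_image_Suc)
  finally have "{f (-1)<..<1} \<subseteq> iter_image f (Suc n) J" .
  moreover have "{-1<..<1} \<subseteq> {-1<..<0} \<union> {f (-1)<..<1}"
    using f_minus_one_less_0 by auto
  ultimately have "{-1<..<1} \<subseteq> (\<Union>i\<le>Suc n. iter_image f i J)"
    using assms by fastforce
  then show ?thesis
    unfolding images_cover_def by blast
qed

lemma images_cover_if_right_half:
  assumes "{0<..<1} \<subseteq> iter_image f n J"
  shows "images_cover f J"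
proof -
  have "{-1<..<f 1} \<subseteq> f ` {0<..<1}"
    using right_branch_expansion(2)[of 0 1] by (simp add: right_branch_def)
  also have "\<dots> \<subseteq> iter_image f (Suc n) J"
    using assms by (auto simp: iter_image_Suc)
  finally have "{-1<..<f 1} \<subseteq> iter_image f (Suc n) J" .
  moreover have "{-1<..<1} \<subseteq> {0<..<1} \<union> {-1<..<f 1}"
    using f_one_greater_0 by auto
  ultimately have "{-1<..<1} \<subseteq> (\<Union>i\<le>Suc n. iter_image f i J)"
    using assms by fastforce
  then show ?thesis
    unfolding images_cover_def by blast
qed

lemma image_stretches_off_0:
  assumes "{c<..<d} \<subseteq> S" "-1 \<le> c" "c < d" "d \<le> 1" "d \<le> 0 \<or> 0 \<le> c"
  shows "contains_subinterval (f ` (S - {0})) (\<mu> * (d - c))"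
proof -
  have sub: "f ` {c<..<d} \<subseteq> f ` (S - {0})"
    using assms(1,5) by auto
  show ?thesis
  proof (cases "d \<le> 0")
    case True
    have "-1 \<le> f c" "left_branch d \<le> 1"
      using maps_into[of c] maps_into[of d] assms True
      by (auto simp: lorenz_dom_def left_branch_def)
    then show ?thesis
      using left_branch_expansion[of c d] sub assms True
      unfolding contains_subinterval_def by (intro exI conjI) auto
  next
    case False
    have "-1 \<le> right_branch c" "f d \<le> 1"
      using maps_into[of c] maps_into[of d] assms False
      by (auto simp: lorenz_dom_def right_branch_def)
    then show ?thesis
      using right_branch_expansion[of c d] sub assms False
      unfolding contains_subinterval_def by (intro exI conjI) auto
  qed
qed

lemma image_stretches_across_0:
  assumes sub: "{c<..<d} \<subseteq> iter_image f n J" and "-1 \<le> c" "c < 0" "0 < d" "d \<le> 1"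
  shows "images_cover f J \<or> (\<exists>m. contains_subinterval (iter_image f m J) (\<mu>\<^sup>2 / 2 * (d - c)))"
proof -
  have image: "f ` I \<subseteq> iter_image f (Suc n) J" if "I \<subseteq> {c<..<d} - {0}" for I
    using that sub by (auto simp: iter_image_Suc)
  have "f ` {c<..<0} \<subseteq> iter_image f (Suc n) J" "f ` {0<..<d} \<subseteq> iter_image f (Suc n) J"
    using assms by (auto intro!: image)
  then have left: "{f c<..<1} \<subseteq> iter_image f (Suc n) J" "\<mu> * (0 - c) \<le> 1 - f c"
    and right: "{-1<..<f d} \<subseteq> iter_image f (Suc n) J" "\<mu> * (d - 0) \<le> f d + 1"
    using left_branch_expansion[of c 0] right_branch_expansion[of 0 d] assms
    by (auto simp: left_branch_def right_branch_def)
  have "f c \<in> {-1<..<1}" "f d \<in> {-1<..<1}"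
    using maps_into assms by (auto simp: lorenz_dom_def)
  consider "0 < f d" | "f c < 0" | "f d \<le> 0" "0 \<le> f c" "-c \<le> d" | "f d \<le> 0" "0 \<le> f c" "d < -c"
    by linarith
  then show ?thesis
  proof cases
    case 1
    then show ?thesis
      using right(1) images_cover_if_left_half by fastforce
  next
    case 2
    then show ?thesis
      using left(1) images_cover_if_right_half by fastforce
  next
    case 3
    have "contains_subinterval (iter_image f (Suc (Suc n)) J) (\<mu> * (f d + 1))"
      using image_stretches_off_0[OF right(1)] 3 \<open>f d \<in> {-1<..<1}\<close>
      by (simp add: iter_image_Suc[of f "Suc n"])
    moreover have "\<mu>\<^sup>2 / 2 * (d - c) \<le> \<mu> * (f d + 1)"
    proof -
      have "\<mu>\<^sup>2 / 2 * (d - c) \<le> \<mu> * (\<mu> * d)"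
        using 3 mult_nonneg_nonneg[of "\<mu> * \<mu>" "c + d"]
        by (simp add: power2_eq_square field_simps)
      also have "\<dots> \<le> \<mu> * (f d + 1)"
        using mult_left_mono[OF right(2), of \<mu>] one_less_mu by simp
      finally show ?thesis .
    qed
    ultimately show ?thesis
      using contains_subinterval_mono by blast
  next
    case 4
    have "contains_subinterval (iter_image f (Suc (Suc n)) J) (\<mu> * (1 - f c))"
      using image_stretches_off_0[OF left(1)] 4 \<open>f c \<in> {-1<..<1}\<close>
      by (simp add: iter_image_Suc[of f "Suc n"])
    moreover have "\<mu>\<^sup>2 / 2 * (d - c) \<le> \<mu> * (1 - f c)"
    proof -
      have "\<mu>\<^sup>2 / 2 * (d - c) \<le> \<mu> * (\<mu> * (0 - c))"
        using 4 mult_nonneg_nonneg[of "\<mu> * \<mu>" "- c - d"]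
        by (simp add: power2_eq_square field_simps)
      also have "\<dots> \<le> \<mu> * (1 - f c)"
        using mult_left_mono[OF left(2), of \<mu>] one_less_mu by simp
      finally show ?thesis .
    qed
    ultimately show ?thesis
      using contains_subinterval_mono by blast
  qed
qed

definition stretch_factor :: real where
  "stretch_factor = min \<mu> (\<mu>\<^sup>2 / 2)"

lemma one_less_stretch_factor: "1 < stretch_factor"
  using one_less_mu two_less_mu_squared by (simp add: stretch_factor_def)

lemma iter_image_stretches:
  assumes "contains_subinterval (iter_image f n J) L" and "0 < L"
  shows "images_cover f J \<or> (\<exists>m. contains_subinterval (iter_image f m J) (stretch_factor * L))"
proof -
  obtain c d where cd: "-1 \<le> c" "d \<le> 1" "L \<le> d - c"
    and sub: "{c<..<d} \<subseteq> iter_image f n J"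
    using assms(1) unfolding contains_subinterval_def by blast
  have "stretch_factor * L \<le> stretch_factor * (d - c)"
    using cd one_less_stretch_factor by simp
  moreover have "stretch_factor * (d - c) \<le> \<mu> * (d - c)"
    and "stretch_factor * (d - c) \<le> \<mu>\<^sup>2 / 2 * (d - c)"
    using cd assms(2) by (intro mult_right_mono; simp add: stretch_factor_def)+
  ultimately have le_mu: "stretch_factor * L \<le> \<mu> * (d - c)"
    and le_mu2: "stretch_factor * L \<le> \<mu>\<^sup>2 / 2 * (d - c)"
    by linarith+
  show ?thesis
  proof (cases "d \<le> 0 \<or> 0 \<le> c")
    case True
    then have "contains_subinterval (iter_image f (Suc n) J) (\<mu> * (d - c))"
      using image_stretches_off_0[OF sub] cd assms(2) by (simp add: iter_image_Suc)
    then show ?thesis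
      using contains_subinterval_mono[OF _ le_mu] by blast
  next
    case False
    then show ?thesis
      using image_stretches_across_0[OF sub] cd contains_subinterval_mono[OF _ le_mu2]
      by fastforce
  qed
qed

lemma images_cover_if_contains_subinterval:
  assumes "contains_subinterval (iter_image f n J) L" and "0 < L"
  shows "images_cover f J"
proof -
  obtain k where "2 / L < stretch_factor ^ k"
    using real_arch_pow[OF one_less_stretch_factor] by blast
  then have "2 < stretch_factor ^ k * L"
    using \<open>0 < L\<close> by (simp add: field_simps)
  then show ?thesis
    using assms
  proof (induction k arbitrary: n L)
    case 0
    then show ?case
      by (auto simp: contains_subinterval_def)
  next
    case (Suc k)
    have "0 < stretch_factor * L"
      using Suc.prems(3) one_less_stretch_factor by simp
    moreover have "2 < stretch_factor ^ k * (stretch_factor * L)"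
      using Suc.prems(1) by (simp add: ac_simps)
    ultimately show ?case
      using iter_image_stretches[OF Suc.prems(2,3)] Suc.IH by blast
  qed
qed

end

theorem mainTheorem8:
  fixes f :: "real \<Rightarrow> real" and r :: nat and a b :: real
  assumes "lorenz_expanding r f"
    and "a < b" and "{a<..<b} \<subseteq> lorenz_dom"
  shows "\<exists>N>0. (\<Union>i\<in>{0..N}. iter_image f i {a<..<b}) = {-1<..<1}"
proof -
  obtain f' \<mu> where "lorenz_map f f' \<mu>"
    using lorenz_expanding_imp_lorenz_map[OF assms(1)] by blast
  then interpret lorenz_map f f' \<mu> .
  have "{a<..<b} \<subseteq> {-1..1}"
    using assms(3) by (auto simp: lorenz_dom_def)
  then have "-1 \<le> a" "b \<le> 1"
    using assms(2) by (simp_all add: greaterThanLessThan_subseteq_atLeastAtMost_iff)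
  then have "contains_subinterval (iter_image f 0 {a<..<b}) (b - a)"
    by (auto simp: contains_subinterval_def)
  then have "images_cover f {a<..<b}"
    by (rule images_cover_if_contains_subinterval) (use assms(2) in simp)
  then obtain N where N: "{-1<..<1} \<subseteq> (\<Union>i\<le>N. iter_image f i {a<..<b})"
    unfolding images_cover_def by blast
  have "(\<Union>i\<in>{0..Suc N}. iter_image f i {a<..<b}) = {-1<..<1}"
  proof
    show "(\<Union>i\<in>{0..Suc N}. iter_image f i {a<..<b}) \<subseteq> {-1<..<1}"
      using iter_image_subset[of "{a<..<b}"] \<open>-1 \<le> a\<close> \<open>b \<le> 1\<close>
      by (simp add: UN_subset_iff subset_eq)
    show "{-1<..<1} \<subseteq> (\<Union>i\<in>{0..Suc N}. iter_image f i {a<..<b})"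
      by (rule order_trans[OF N], rule UN_mono) auto
  qed
  then show ?thesis
    by blast
qed

end
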